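(* With the conventions $g(0)=h(0)=g_1(0)=h_1(0)=0$, for all $M\geq 2$: $$g(M)=g(M-1)+g(M-2)+F_{M-1},\qquad h(M)=h(M-1)+h(M-2)+F_{M-2},$$ $$g_1(M)=g_1(M-1)+g_1(M-2)+F_{M-1},\qquad h_1(M)=h_1(M-1)+h_1(M-2)+F_{M-1}.$$
   Context: $F_k$ denotes the Fibonacci numbers with $F_{-1}=1$, $F_0=0$, $F_1=1$, $F_k=F_{k-1}+F_{k-2}$. The perimeter of a nonempty partition $\lambda$ with largest part $\lambda_1$ and $\ell(\lambda)$ parts is $\lambda_1+\ell(\lambda)-1$. $\mathcal G(M)$ is the set of partitions into odd parts with perimeter $M$, $\mathcal H(M)$ the set of partitions into distinct parts with perimeter $M$; $g(M)$ (resp. $h(M)$) is the total number of parts, summed over all partitions in $\mathcal G(M)$ (resp. $\mathcal H(M)$). $\mathcal G_1(M)$ is the set of partitions with perimeter $M$ in which exactly one distinct even integer occurs as a part (possibly with multiplicity greater than one) and all other parts are odd; $\mathcal H_1(M)$ is the set of partitions with perimeter $M$ in which exactly one part value occurs at least twice and every other part value occurs exactly once. $g_1(M)=|\mathcal G_1(M)|$, $h_1(M)=|\mathcal H_1(M)|$. *)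

theory Defs
  imports Main "HOL-Library.Multiset" "HOL-Number_Theory.Fib"
begin

definition perimeter :: "nat multiset \<Rightarrow> nat" where
  "perimeter p = Max (set_mset p) + size p - 1"

definition is_partition :: "nat multiset \<Rightarrow> bool" where
  "is_partition p \<longleftrightarrow> (\<forall>x\<in>#p. 0 < x)"

definition GG :: "nat \<Rightarrow> nat multiset set" where
  "GG M = {p. p \<noteq> {#} \<and> is_partition p \<and> (\<forall>x\<in>#p. odd x) \<and> perimeter p = M}"

definition HH :: "nat \<Rightarrow> nat multiset set" where
  "HH M = {p. p \<noteq> {#} \<and> is_partition p \<and> (\<forall>x. count p x \<le> 1) \<and> perimeter p = M}"

definition GG1 :: "nat \<Rightarrow> nat multiset set" where
  "GG1 M = {p. p \<noteq> {#} \<and> is_partition p \<and> card {x \<in> set_mset p. even x} = 1 \<and> perimeter p = M}"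

definition HH1 :: "nat \<Rightarrow> nat multiset set" where
  "HH1 M = {p. p \<noteq> {#} \<and> is_partition p \<and> card {x \<in> set_mset p. 2 \<le> count p x} = 1 \<and> perimeter p = M}"

definition g :: "nat \<Rightarrow> nat" where "g M = (\<Sum>p\<in>GG M. size p)"
definition h :: "nat \<Rightarrow> nat" where "h M = (\<Sum>p\<in>HH M. size p)"
definition g1 :: "nat \<Rightarrow> nat" where "g1 M = card (GG1 M)"
definition h1 :: "nat \<Rightarrow> nat" where "h1 M = card (HH1 M)"

end

theory Submission
  imports Defs
begin

(* Write a partition as add_mset a r with a its largest part. Three reversible moves on the largest
   part shift the perimeter by a fixed amount: duplicating a (by 1), raising a simple largest part
   by k (by k), and putting a new part a + 1 on top (by 2). Splitting a family of perimeter n + 2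
   according to whether its largest part is repeated, and where needed by its parity or by whether
   a - 1 occurs, makes every piece the image of a family of perimeter n + 1 or n under one move.
   The Fibonacci terms are the pieces coming from G and H themselves, whose sizes satisfy the
   Fibonacci recurrence by the same moves. *)

lemma card_filter_split:
  "finite S \<Longrightarrow> card S = card {x \<in> S. P x} + card {x \<in> S. \<not> P x}"
  using card_Int_Diff[of S "Collect P"] by (simp add: Int_def set_diff_eq)

lemma sum_filter_split:
  "finite S \<Longrightarrow> sum f S = sum f {x \<in> S. P x} + sum f {x \<in> S. \<not> P x}"
  using sum.Int_Diff[of S f "Collect P"] by (simp add: Int_def set_diff_eq)

definition max_part :: "nat multiset \<Rightarrow> nat" where
  "max_part p = Max (set_mset p)"

definition drop_max :: "nat multiset \<Rightarrow> nat multiset" where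
  "drop_max p = p - {#max_part p#}"

lemma max_part_in: "p \<noteq> {#} \<Longrightarrow> max_part p \<in># p"
  unfolding max_part_def by simp

lemma le_max_part: "x \<in># p \<Longrightarrow> x \<le> max_part p"
  unfolding max_part_def by simp

lemma max_part_eqI: "b \<in># p \<Longrightarrow> \<forall>x\<in>#p. x \<le> b \<Longrightarrow> max_part p = b"
  unfolding max_part_def by (intro Max_eqI) auto

lemma max_part_add_mset [simp]: "\<forall>x\<in>#r. x \<le> a \<Longrightarrow> max_part (add_mset a r) = a"
  by (rule max_part_eqI) auto

lemma drop_max_add_mset [simp]: "\<forall>x\<in>#r. x \<le> a \<Longrightarrow> drop_max (add_mset a r) = r"
  by (simp add: drop_max_def)

lemma max_part_decomp:
  fixes p :: "nat multiset"
  assumes "p \<noteq> {#}"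
  obtains a r where "p = add_mset a r" and "\<forall>x\<in>#r. x \<le> a"
proof
  show "p = add_mset (max_part p) (drop_max p)"
    using max_part_in[OF assms] by (simp add: drop_max_def)
  show "\<forall>x\<in>#drop_max p. x \<le> max_part p"
    by (auto simp: drop_max_def le_max_part dest: in_diffD)
qed

lemma all_le_pred_if_notin:
  fixes b :: nat
  assumes "\<forall>x\<in>#r. x \<le> b" and "b \<notin># r"
  shows "\<forall>x\<in>#r. x \<le> b - 1"
proof
  fix x assume "x \<in># r"
  with assms have "x \<le> b" "x \<noteq> b" by auto
  then show "x \<le> b - 1" by linarith
qed

lemma Suc_size_drop_max: "p \<noteq> {#} \<Longrightarrow> Suc (size (drop_max p)) = size p"
  by (metis max_part_decomp drop_max_add_mset size_add_mset)

definition partitions_with :: "(nat multiset \<Rightarrow> bool) \<Rightarrow> nat \<Rightarrow> nat multiset set" where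
  "partitions_with P M = {p. p \<noteq> {#} \<and> is_partition p \<and> P p \<and> perimeter p = M}"

lemma mem_partitions_with_iff:
  "p \<in> partitions_with P M \<longleftrightarrow>
    p \<noteq> {#} \<and> (\<forall>x\<in>#p. 0 < x) \<and> P p \<and> max_part p + size p = Suc M"
  by (cases p) (auto simp: partitions_with_def is_partition_def perimeter_def max_part_def)

lemma add_mset_in_partitions_with_iff:
  assumes "\<forall>x\<in>#r. x \<le> a"
  shows "add_mset a r \<in> partitions_with P M \<longleftrightarrow>
    0 < a \<and> (\<forall>x\<in>#r. 0 < x) \<and> P (add_mset a r) \<and> a + size r = M"
  using assms by (simp add: mem_partitions_with_iff)

lemma empty_notin_partitions_with [simp]: "{#} \<notin> partitions_with P M"
  by (simp add: partitions_with_def)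

lemma finite_partitions_with: "finite (partitions_with P M)"
proof (rule finite_subset)
  show "partitions_with P M \<subseteq> (\<Union>n\<in>{..M}. multisets_of_size {..M} n)"
  proof
    fix p assume p: "p \<in> partitions_with P M"
    then obtain a r where ar: "p = add_mset a r" "\<forall>x\<in>#r. x \<le> a"
      by (auto simp: partitions_with_def elim: max_part_decomp)
    with p have "0 < a" "a + size r = M" by (simp_all add: add_mset_in_partitions_with_iff)
    with ar show "p \<in> (\<Union>n\<in>{..M}. multisets_of_size {..M} n)"
      by (auto simp: multisets_of_size_def)
  qed
qed auto

lemma partitions_with_0: "partitions_with P 0 = {}"
proof -
  have "p \<notin> partitions_with P 0" for p
    by (cases "p = {#}") (auto elim!: max_part_decomp simp: add_mset_in_partitions_with_iff)
  then show ?thesis by blast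
qed

lemma partitions_with_1: "P {#1#} \<Longrightarrow> partitions_with P (Suc 0) = {{#1#}}"
proof -
  assume "P {#1#}"
  moreover have "p = {#1#}" if p: "p \<in> partitions_with P (Suc 0)" for p
  proof -
    obtain a r where ar: "p = add_mset a r" "\<forall>x\<in>#r. x \<le> a"
      using p by (auto simp: partitions_with_def elim: max_part_decomp)
    with p have "0 < a" "a + size r = 1" by (simp_all add: add_mset_in_partitions_with_iff)
    then have "a = 1" "r = {#}" by (cases r; simp)+
    with ar show ?thesis by simp
  qed
  moreover have "{#1#} \<in> partitions_with P (Suc 0) \<longleftrightarrow> P {#1#}"
    using add_mset_in_partitions_with_iff[of "{#}" 1 P "Suc 0"] by simp
  ultimately show ?thesis by blast
qed

lemma two_le_simple_max_part:
  assumes "add_mset b r \<in> partitions_with P (Suc (Suc n))" and "\<forall>x\<in>#r. x \<le> b" and "b \<notin># r"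
  shows "2 \<le> b"
proof (cases "r = {#}")
  case True
  with assms(1) show ?thesis by (simp add: add_mset_in_partitions_with_iff)
next
  case False
  then obtain x where "x \<in># r" by blast
  with assms have "0 < x" "x \<le> b" "x \<noteq> b"
    by (auto simp: add_mset_in_partitions_with_iff)
  then show ?thesis by linarith
qed

definition distinct_parts :: "nat multiset \<Rightarrow> bool" where
  "distinct_parts p \<longleftrightarrow> (\<forall>x. count p x \<le> 1)"

definition even_parts :: "nat multiset \<Rightarrow> nat set" where
  "even_parts p = {x \<in> set_mset p. even x}"

definition repeated_parts :: "nat multiset \<Rightarrow> nat set" where
  "repeated_parts p = {x \<in> set_mset p. 2 \<le> count p x}"

lemma GG_eq: "GG = partitions_with (\<lambda>p. \<forall>x\<in>#p. odd x)"
  by (auto simp: GG_def partitions_with_def)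

lemma HH_eq: "HH = partitions_with distinct_parts"
  by (auto simp: HH_def partitions_with_def distinct_parts_def)

lemma GG1_eq: "GG1 = partitions_with (\<lambda>p. card (even_parts p) = 1)"
  by (auto simp: GG1_def partitions_with_def even_parts_def)

lemma HH1_eq: "HH1 = partitions_with (\<lambda>p. card (repeated_parts p) = 1)"
  by (auto simp: HH1_def partitions_with_def repeated_parts_def)

lemma distinct_parts_empty [simp]: "distinct_parts {#}"
  by (simp add: distinct_parts_def)

lemma distinct_parts_add_mset [simp]:
  "distinct_parts (add_mset a r) \<longleftrightarrow> a \<notin># r \<and> distinct_parts r"
  unfolding distinct_parts_def
proof (intro iffI conjI allI)
  assume distinct: "\<forall>x. count (add_mset a r) x \<le> 1"
  show "a \<notin># r"
    using distinct[rule_format, of a] by (simp add: not_in_iff)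
  show "count r x \<le> 1" for x
    using distinct[rule_format, of x] by (simp split: if_splits)
next
  fix x assume "a \<notin># r \<and> (\<forall>x. count r x \<le> 1)"
  then show "count (add_mset a r) x \<le> 1"
    by (auto simp: not_in_iff)
qed

lemma even_parts_add_mset:
  "even_parts (add_mset a r) = (if even a then insert a (even_parts r) else even_parts r)"
  by (auto simp: even_parts_def)

lemma finite_even_parts [simp]: "finite (even_parts p)"
  by (simp add: even_parts_def)

lemma notin_even_parts [simp]: "a \<notin># p \<Longrightarrow> a \<notin> even_parts p"
  by (simp add: even_parts_def)

lemma even_parts_empty_iff: "even_parts p = {} \<longleftrightarrow> (\<forall>x\<in>#p. odd x)"
  by (auto simp: even_parts_def)

lemma repeated_parts_add_mset:
  "repeated_parts (add_mset a r) = (if a \<in># r then insert a (repeated_parts r) else repeated_parts r)"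
  by (auto simp: repeated_parts_def dest: count_inI)

lemma finite_repeated_parts [simp]: "finite (repeated_parts p)"
  by (simp add: repeated_parts_def)

lemma notin_repeated_parts [simp]: "a \<notin># p \<Longrightarrow> a \<notin> repeated_parts p"
  by (simp add: repeated_parts_def)

lemma repeated_parts_empty_iff: "repeated_parts p = {} \<longleftrightarrow> distinct_parts p"
proof -
  have "x \<in># p \<and> 2 \<le> count p x \<longleftrightarrow> \<not> count p x \<le> 1" for x
    by (auto simp flip: count_greater_zero_iff)
  then show ?thesis
    unfolding repeated_parts_def distinct_parts_def by blast
qed

section \<open>Bijections moving the largest part\<close>

lemma bij_betw_add_max_part:
  assumes "{#} \<notin> X" and "{#} \<notin> Y"
    and image: "\<And>a r. \<forall>x\<in>#r. x \<le> a \<Longrightarrow> \<forall>x\<in>#r. x \<le> a + d \<Longrightarrow> add_mset a r \<in> X \<Longrightarrow>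
      add_mset (a + d) (add_mset a r) \<in> Y"
    and inverse: "\<And>b r. \<forall>x\<in>#r. x \<le> b \<Longrightarrow> add_mset b r \<in> Y \<Longrightarrow> r \<in> X \<and> max_part r + d = b"
  shows "bij_betw (\<lambda>q. add_mset (max_part q + d) q) X Y"
proof -
  let ?add = "\<lambda>q. add_mset (max_part q + d) q"
  have drop_add: "drop_max (?add q) = q \<and> ?add q \<in> Y" if "q \<in> X" for q
  proof -
    from that assms(1) obtain a r where "q = add_mset a r" "\<forall>x\<in>#r. x \<le> a"
      by (metis max_part_decomp)
    moreover from this have "\<forall>x\<in>#r. x \<le> a + d"
      by auto
    ultimately show ?thesis using that image by simp
  qed
  have add_drop: "?add (drop_max p) = p \<and> drop_max p \<in> X" if "p \<in> Y" for p
  proof -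
    from that assms(2) obtain b r where "p = add_mset b r" "\<forall>x\<in>#r. x \<le> b"
      by (metis max_part_decomp)
    with that inverse show ?thesis by simp
  qed
  show ?thesis
    by (rule bij_betw_byWitness[where f' = drop_max]) (use drop_add add_drop in auto)
qed

lemma bij_betw_dup_max_part:
  assumes "{#} \<notin> X" and "{#} \<notin> Y"
    and image: "\<And>a r. \<forall>x\<in>#r. x \<le> a \<Longrightarrow> add_mset a r \<in> X \<Longrightarrow> add_mset a (add_mset a r) \<in> Y"
    and inverse: "\<And>a r. \<forall>x\<in>#r. x \<le> a \<Longrightarrow> add_mset a (add_mset a r) \<in> Y \<Longrightarrow> add_mset a r \<in> X"
    and repeated: "\<And>p. p \<in> Y \<Longrightarrow> max_part p \<in># drop_max p"
  shows "bij_betw (\<lambda>q. add_mset (max_part q) q) X Y"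
proof -
  have "bij_betw (\<lambda>q. add_mset (max_part q + 0) q) X Y"
  proof (rule bij_betw_add_max_part[OF assms(1,2)])
    fix a r assume "\<forall>x\<in>#r. x \<le> a" and "add_mset a r \<in> X"
    then show "add_mset (a + 0) (add_mset a r) \<in> Y" by (simp add: image)
  next
    fix b r assume r: "\<forall>x\<in>#r. x \<le> b" and p: "add_mset b r \<in> Y"
    with repeated have "b \<in># r" by fastforce
    then obtain r' where "r = add_mset b r'" by (metis multi_member_split)
    with r p show "r \<in> X \<and> max_part r + 0 = b" by (simp add: inverse)
  qed
  then show ?thesis by simp
qed

lemma bij_betw_raise_max_part:
  assumes "{#} \<notin> X" and "{#} \<notin> Y"
    and image: "\<And>a r. \<forall>x\<in>#r. x \<le> a \<Longrightarrow> \<forall>x\<in>#r. x \<le> a + k \<Longrightarrow> add_mset a r \<in> X \<Longrightarrow>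
      add_mset (a + k) r \<in> Y"
    and inverse: "\<And>b r. \<forall>x\<in>#r. x \<le> b \<Longrightarrow> add_mset b r \<in> Y \<Longrightarrow>
      k \<le> b \<and> (\<forall>x\<in>#r. x \<le> b - k) \<and> add_mset (b - k) r \<in> X"
  shows "bij_betw (\<lambda>q. add_mset (max_part q + k) (drop_max q)) X Y"
proof -
  let ?raise = "\<lambda>q. add_mset (max_part q + k) (drop_max q)"
  let ?lower = "\<lambda>p. add_mset (max_part p - k) (drop_max p)"
  have lower_raise: "?lower (?raise q) = q \<and> ?raise q \<in> Y" if "q \<in> X" for q
  proof -
    from that assms(1) obtain a r where "q = add_mset a r" "\<forall>x\<in>#r. x \<le> a"
      by (metis max_part_decomp)
    moreover from this have "\<forall>x\<in>#r. x \<le> a + k"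
      by auto
    ultimately show ?thesis using that image by simp
  qed
  have raise_lower: "?raise (?lower p) = p \<and> ?lower p \<in> X" if "p \<in> Y" for p
  proof -
    from that assms(2) obtain b r where "p = add_mset b r" "\<forall>x\<in>#r. x \<le> b"
      by (metis max_part_decomp)
    with that inverse show ?thesis by simp
  qed
  show ?thesis
    by (rule bij_betw_byWitness[where f' = ?lower]) (use lower_raise raise_lower in auto)
qed

section \<open>Partitions into odd parts\<close>

lemma finite_GG: "finite (GG n)"
  by (simp add: GG_eq finite_partitions_with)

lemma bij_betw_GG_dup_max:
  "bij_betw (\<lambda>q. add_mset (max_part q) q) (GG (Suc n))
    {p \<in> GG (Suc (Suc n)). max_part p \<in># drop_max p}"
  by (rule bij_betw_dup_max_part) (simp_all add: GG_eq add_mset_in_partitions_with_iff)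

lemma bij_betw_GG_raise_max:
  "bij_betw (\<lambda>q. add_mset (max_part q + 2) (drop_max q)) (GG n)
    {p \<in> GG (Suc (Suc n)). max_part p \<notin># drop_max p}"
proof (rule bij_betw_raise_max_part)
  fix a r assume "\<forall>x\<in>#r. x \<le> a" "\<forall>x\<in>#r. x \<le> a + 2" "add_mset a r \<in> GG n"
  moreover from this have "a + 2 \<notin># r" by force
  ultimately show "add_mset (a + 2) r \<in> {p \<in> GG (Suc (Suc n)). max_part p \<notin># drop_max p}"
    by (simp add: GG_eq add_mset_in_partitions_with_iff)
next
  fix b r assume r: "\<forall>x\<in>#r. x \<le> b"
    and p: "add_mset b r \<in> {p \<in> GG (Suc (Suc n)). max_part p \<notin># drop_max p}"
  then have b: "0 < b" "odd b" "b \<notin># r" and parts: "\<forall>x\<in>#r. 0 < x \<and> odd x"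
    and size: "b + size r = Suc (Suc n)"
    by (simp_all add: GG_eq add_mset_in_partitions_with_iff)
  have below: "\<forall>x\<in>#r. x \<le> b - 2"
  proof
    fix x assume "x \<in># r"
    with r b parts have "x \<le> b" "x \<noteq> b" "odd x" by auto
    with \<open>odd b\<close> show "x \<le> b - 2" by presburger
  qed
  have "2 \<le> b"
    using p by (auto simp: GG_eq intro: two_le_simple_max_part[OF _ r \<open>b \<notin># r\<close>])
  with \<open>odd b\<close> have "3 \<le> b" by presburger
  with below b parts size show "2 \<le> b \<and> (\<forall>x\<in>#r. x \<le> b - 2) \<and> add_mset (b - 2) r \<in> GG n"
    by (auto simp: GG_eq add_mset_in_partitions_with_iff)
qed (simp_all add: GG_eq)

lemma card_GG_Suc_Suc: "card (GG (Suc (Suc n))) = card (GG (Suc n)) + card (GG n)"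
proof -
  have "card (GG (Suc (Suc n))) = card {p \<in> GG (Suc (Suc n)). max_part p \<in># drop_max p}
      + card {p \<in> GG (Suc (Suc n)). max_part p \<notin># drop_max p}"
    by (rule card_filter_split[OF finite_GG])
  also have "\<dots> = card (GG (Suc n)) + card (GG n)"
    using bij_betw_same_card[OF bij_betw_GG_dup_max] bij_betw_same_card[OF bij_betw_GG_raise_max]
    by simp
  finally show ?thesis .
qed

lemma card_GG: "card (GG n) = fib n"
  by (induction n rule: fib.induct)
    (simp_all add: card_GG_Suc_Suc, simp_all add: GG_eq partitions_with_0 partitions_with_1)

lemma g_Suc_Suc: "g (Suc (Suc n)) = g (Suc n) + g n + fib (Suc n)"
proof -
  have "g (Suc (Suc n)) = sum size {p \<in> GG (Suc (Suc n)). max_part p \<in># drop_max p}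
      + sum size {p \<in> GG (Suc (Suc n)). max_part p \<notin># drop_max p}"
    unfolding g_def by (rule sum_filter_split[OF finite_GG])
  also have "sum size {p \<in> GG (Suc (Suc n)). max_part p \<in># drop_max p} = (\<Sum>q\<in>GG (Suc n). Suc (size q))"
    using sum.reindex_bij_betw[OF bij_betw_GG_dup_max, of size] by simp
  also have "\<dots> = g (Suc n) + fib (Suc n)"
    by (simp add: sum_Suc g_def card_GG)
  also have "sum size {p \<in> GG (Suc (Suc n)). max_part p \<notin># drop_max p} = (\<Sum>q\<in>GG n. Suc (size (drop_max q)))"
    using sum.reindex_bij_betw[OF bij_betw_GG_raise_max, of size] by simp
  also have "\<dots> = g n"
    unfolding g_def by (rule sum.cong) (simp_all add: GG_eq Suc_size_drop_max mem_partitions_with_iff)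
  finally show ?thesis by simp
qed

section \<open>Partitions into distinct parts\<close>

lemma finite_HH: "finite (HH n)"
  by (simp add: HH_eq finite_partitions_with)

lemma bij_betw_HH_add_max:
  "bij_betw (\<lambda>q. add_mset (max_part q + 1) q) (HH n) {p \<in> HH (Suc (Suc n)). max_part p - 1 \<in># p}"
proof (rule bij_betw_add_max_part)
  fix a r assume "\<forall>x\<in>#r. x \<le> a" "\<forall>x\<in>#r. x \<le> a + 1" "add_mset a r \<in> HH n"
  moreover from this have "a + 1 \<notin># r" by force
  ultimately show "add_mset (a + 1) (add_mset a r) \<in> {p \<in> HH (Suc (Suc n)). max_part p - 1 \<in># p}"
    by (simp add: HH_eq add_mset_in_partitions_with_iff)
next
  fix b r assume r: "\<forall>x\<in>#r. x \<le> b" and "add_mset b r \<in> {p \<in> HH (Suc (Suc n)). max_part p - 1 \<in># p}"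
  then have "0 < b" "b \<notin># r" "b - 1 \<in># r" "\<forall>x\<in>#r. 0 < x" "distinct_parts r"
    "b + size r = Suc (Suc n)"
    by (auto simp: HH_eq add_mset_in_partitions_with_iff)
  moreover from this r have "max_part r = b - 1"
    by (intro max_part_eqI all_le_pred_if_notin)
  ultimately show "r \<in> HH n \<and> max_part r + 1 = b"
    by (auto simp: HH_eq mem_partitions_with_iff)
qed (simp_all add: HH_eq)

lemma bij_betw_HH_raise_max:
  "bij_betw (\<lambda>q. add_mset (max_part q + 1) (drop_max q)) (HH (Suc n))
    {p \<in> HH (Suc (Suc n)). max_part p - 1 \<notin># p}"
proof (rule bij_betw_raise_max_part)
  fix a r assume "\<forall>x\<in>#r. x \<le> a" "\<forall>x\<in>#r. x \<le> a + 1" "add_mset a r \<in> HH (Suc n)"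
  moreover from this have "a + 1 \<notin># r" by force
  ultimately show "add_mset (a + 1) r \<in> {p \<in> HH (Suc (Suc n)). max_part p - 1 \<notin># p}"
    by (simp add: HH_eq add_mset_in_partitions_with_iff)
next
  fix b r assume r: "\<forall>x\<in>#r. x \<le> b"
    and p: "add_mset b r \<in> {p \<in> HH (Suc (Suc n)). max_part p - 1 \<notin># p}"
  then have b: "b \<notin># r" "b - 1 \<notin># r" and "\<forall>x\<in>#r. 0 < x" "distinct_parts r"
    "b + size r = Suc (Suc n)"
    by (auto simp: HH_eq add_mset_in_partitions_with_iff)
  moreover have "2 \<le> b"
    using p by (auto simp: HH_eq intro: two_le_simple_max_part[OF _ r \<open>b \<notin># r\<close>])
  moreover have "\<forall>x\<in>#r. x \<le> b - 1"
    using r \<open>b \<notin># r\<close> by (rule all_le_pred_if_notin)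
  ultimately show "1 \<le> b \<and> (\<forall>x\<in>#r. x \<le> b - 1) \<and> add_mset (b - 1) r \<in> HH (Suc n)"
    by (auto simp: HH_eq add_mset_in_partitions_with_iff)
qed (simp_all add: HH_eq)

lemma card_HH_Suc_Suc: "card (HH (Suc (Suc n))) = card (HH (Suc n)) + card (HH n)"
proof -
  have "card (HH (Suc (Suc n))) = card {p \<in> HH (Suc (Suc n)). max_part p - 1 \<in># p}
      + card {p \<in> HH (Suc (Suc n)). max_part p - 1 \<notin># p}"
    by (rule card_filter_split[OF finite_HH])
  also have "\<dots> = card (HH n) + card (HH (Suc n))"
    using bij_betw_same_card[OF bij_betw_HH_add_max] bij_betw_same_card[OF bij_betw_HH_raise_max]
    by simp
  finally show ?thesis by simp
qed

lemma card_HH: "card (HH n) = fib n"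
  by (induction n rule: fib.induct)
    (simp_all add: card_HH_Suc_Suc, simp_all add: HH_eq partitions_with_0 partitions_with_1)

lemma h_Suc_Suc: "h (Suc (Suc n)) = h (Suc n) + h n + fib n"
proof -
  have "h (Suc (Suc n)) = sum size {p \<in> HH (Suc (Suc n)). max_part p - 1 \<in># p}
      + sum size {p \<in> HH (Suc (Suc n)). max_part p - 1 \<notin># p}"
    unfolding h_def by (rule sum_filter_split[OF finite_HH])
  also have "sum size {p \<in> HH (Suc (Suc n)). max_part p - 1 \<in># p} = (\<Sum>q\<in>HH n. Suc (size q))"
    using sum.reindex_bij_betw[OF bij_betw_HH_add_max, of size] by simp
  also have "\<dots> = h n + fib n"
    by (simp add: sum_Suc h_def card_HH)
  also have "sum size {p \<in> HH (Suc (Suc n)). max_part p - 1 \<notin># p}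
      = (\<Sum>q\<in>HH (Suc n). Suc (size (drop_max q)))"
    using sum.reindex_bij_betw[OF bij_betw_HH_raise_max, of size] by simp
  also have "\<dots> = h (Suc n)"
    unfolding h_def by (rule sum.cong) (simp_all add: HH_eq Suc_size_drop_max mem_partitions_with_iff)
  finally show ?thesis by simp
qed

section \<open>Partitions with exactly one even part size\<close>

lemma finite_GG1: "finite (GG1 n)"
  by (simp add: GG1_eq finite_partitions_with)

lemma bij_betw_GG1_dup_max:
  "bij_betw (\<lambda>q. add_mset (max_part q) q) (GG1 (Suc n))
    {p \<in> GG1 (Suc (Suc n)). max_part p \<in># drop_max p}"
  by (rule bij_betw_dup_max_part)
    (simp_all add: GG1_eq add_mset_in_partitions_with_iff even_parts_add_mset split: if_splits)

lemma bij_betw_GG1_raise_even_max: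
  "bij_betw (\<lambda>q. add_mset (max_part q + 1) (drop_max q)) (GG (Suc n))
    {p \<in> {p \<in> GG1 (Suc (Suc n)). max_part p \<notin># drop_max p}. even (max_part p)}"
proof (rule bij_betw_raise_max_part)
  fix a r assume "\<forall>x\<in>#r. x \<le> a" "\<forall>x\<in>#r. x \<le> a + 1" "add_mset a r \<in> GG (Suc n)"
  moreover from this have "a + 1 \<notin># r" by force
  ultimately show "add_mset (a + 1) r
      \<in> {p \<in> {p \<in> GG1 (Suc (Suc n)). max_part p \<notin># drop_max p}. even (max_part p)}"
    by (simp add: GG_eq GG1_eq add_mset_in_partitions_with_iff even_parts_add_mset split: if_splits
        flip: even_parts_empty_iff)
next
  fix b r assume r: "\<forall>x\<in>#r. x \<le> b"
    and "add_mset b r \<in> {p \<in> {p \<in> GG1 (Suc (Suc n)). max_part p \<notin># drop_max p}. even (max_part p)}"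
  then have b: "0 < b" "even b" "b \<notin># r" and "\<forall>x\<in>#r. 0 < x"
    and card: "card (insert b (even_parts r)) = 1" and "b + size r = Suc (Suc n)"
    by (auto simp: GG1_eq add_mset_in_partitions_with_iff even_parts_add_mset)
  moreover from card \<open>b \<notin># r\<close> have "\<forall>x\<in>#r. odd x"
    by (simp flip: even_parts_empty_iff)
  moreover have "\<forall>x\<in>#r. x \<le> b - 1"
    using r \<open>b \<notin># r\<close> by (rule all_le_pred_if_notin)
  ultimately show "1 \<le> b \<and> (\<forall>x\<in>#r. x \<le> b - 1) \<and> add_mset (b - 1) r \<in> GG (Suc n)"
    by (auto simp: GG_eq add_mset_in_partitions_with_iff)
qed (simp_all add: GG_eq GG1_eq)

lemma bij_betw_GG1_add_max:
  "bij_betw (\<lambda>q. add_mset (max_part q + 1) q) {q \<in> GG1 n. even (max_part q)}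
    {p \<in> {p \<in> {p \<in> GG1 (Suc (Suc n)). max_part p \<notin># drop_max p}. odd (max_part p)}.
      max_part p - 1 \<in># p}"
proof (rule bij_betw_add_max_part)
  fix a r assume "\<forall>x\<in>#r. x \<le> a" "\<forall>x\<in>#r. x \<le> a + 1" "add_mset a r \<in> {q \<in> GG1 n. even (max_part q)}"
  moreover from this have "a + 1 \<notin># r" by force
  ultimately show "add_mset (a + 1) (add_mset a r) \<in> {p \<in> {p \<in> {p \<in> GG1 (Suc (Suc n)).
      max_part p \<notin># drop_max p}. odd (max_part p)}. max_part p - 1 \<in># p}"
    by (auto simp: GG1_eq add_mset_in_partitions_with_iff even_parts_add_mset)
next
  fix b r assume r: "\<forall>x\<in>#r. x \<le> b" and "add_mset b r \<in> {p \<in> {p \<in> {p \<in> GG1 (Suc (Suc n)).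
      max_part p \<notin># drop_max p}. odd (max_part p)}. max_part p - 1 \<in># p}"
  then have "0 < b" "odd b" "b \<notin># r" "b - 1 \<in># r" "\<forall>x\<in>#r. 0 < x" "card (even_parts r) = 1"
    "b + size r = Suc (Suc n)"
    by (auto simp: GG1_eq add_mset_in_partitions_with_iff even_parts_add_mset)
  moreover from this r have "max_part r = b - 1"
    by (intro max_part_eqI all_le_pred_if_notin)
  ultimately show "r \<in> {q \<in> GG1 n. even (max_part q)} \<and> max_part r + 1 = b"
    by (auto simp: GG1_eq mem_partitions_with_iff)
qed (simp_all add: GG1_eq)

lemma bij_betw_GG1_raise_odd_max:
  "bij_betw (\<lambda>q. add_mset (max_part q + 2) (drop_max q)) {q \<in> GG1 n. odd (max_part q)}
    {p \<in> {p \<in> {p \<in> GG1 (Suc (Suc n)). max_part p \<notin># drop_max p}. odd (max_part p)}.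
      max_part p - 1 \<notin># p}"
proof (rule bij_betw_raise_max_part)
  fix a r assume "\<forall>x\<in>#r. x \<le> a" "\<forall>x\<in>#r. x \<le> a + 2" "add_mset a r \<in> {q \<in> GG1 n. odd (max_part q)}"
  moreover from this have "a + 1 \<notin># r" "a + 2 \<notin># r" by force+
  ultimately show "add_mset (a + 2) r \<in> {p \<in> {p \<in> {p \<in> GG1 (Suc (Suc n)).
      max_part p \<notin># drop_max p}. odd (max_part p)}. max_part p - 1 \<notin># p}"
    by (auto simp: GG1_eq add_mset_in_partitions_with_iff even_parts_add_mset)
next
  fix b r assume r: "\<forall>x\<in>#r. x \<le> b" and p: "add_mset b r \<in> {p \<in> {p \<in> {p \<in> GG1 (Suc (Suc n)).
      max_part p \<notin># drop_max p}. odd (max_part p)}. max_part p - 1 \<notin># p}"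
  then have b: "odd b" "b \<notin># r" "b - 1 \<notin># r" and "\<forall>x\<in>#r. 0 < x" "card (even_parts r) = 1"
    "b + size r = Suc (Suc n)"
    by (auto simp: GG1_eq add_mset_in_partitions_with_iff even_parts_add_mset)
  moreover have "2 \<le> b"
    using p by (auto simp: GG1_eq intro: two_le_simple_max_part[OF _ r \<open>b \<notin># r\<close>])
  with \<open>odd b\<close> have "3 \<le> b" by presburger
  moreover have "\<forall>x\<in>#r. x \<le> b - 2"
    using all_le_pred_if_notin[OF all_le_pred_if_notin[OF r \<open>b \<notin># r\<close>] \<open>b - 1 \<notin># r\<close>]
    by (simp add: numeral_2_eq_2)
  ultimately show "2 \<le> b \<and> (\<forall>x\<in>#r. x \<le> b - 2) \<and> add_mset (b - 2) r \<in> {q \<in> GG1 n. odd (max_part q)}"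
    by (auto simp: GG1_eq add_mset_in_partitions_with_iff even_parts_add_mset)
qed (simp_all add: GG1_eq)

lemma g1_Suc_Suc: "g1 (Suc (Suc n)) = g1 (Suc n) + g1 n + fib (Suc n)"
proof -
  let ?S = "{p \<in> GG1 (Suc (Suc n)). max_part p \<notin># drop_max p}"
  let ?T = "{p \<in> ?S. odd (max_part p)}"
  have "g1 (Suc (Suc n)) = card {p \<in> GG1 (Suc (Suc n)). max_part p \<in># drop_max p} + card ?S"
    unfolding g1_def by (rule card_filter_split[OF finite_GG1])
  also have "card ?S = card {p \<in> ?S. even (max_part p)} + card ?T"
    by (rule card_filter_split) (simp add: finite_GG1)
  also have "card ?T = card {p \<in> ?T. max_part p - 1 \<in># p} + card {p \<in> ?T. max_part p - 1 \<notin># p}"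
    by (rule card_filter_split) (simp add: finite_GG1)
  also have "card {p \<in> ?T. max_part p - 1 \<in># p} + card {p \<in> ?T. max_part p - 1 \<notin># p} = g1 n"
    using bij_betw_same_card[OF bij_betw_GG1_add_max] bij_betw_same_card[OF bij_betw_GG1_raise_odd_max]
      card_filter_split[OF finite_GG1, of n "\<lambda>q. even (max_part q)"]
    by (simp add: g1_def)
  also have "card {p \<in> GG1 (Suc (Suc n)). max_part p \<in># drop_max p} = g1 (Suc n)"
    using bij_betw_same_card[OF bij_betw_GG1_dup_max] by (simp add: g1_def)
  also have "card {p \<in> ?S. even (max_part p)} = fib (Suc n)"
    using bij_betw_same_card[OF bij_betw_GG1_raise_even_max] by (simp add: card_GG)
  finally show ?thesis by simp
qed

section \<open>Partitions with exactly one repeated part size\<close>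

lemma finite_HH1: "finite (HH1 n)"
  by (simp add: HH1_eq finite_partitions_with)

lemma bij_betw_HH1_dup_repeated_max:
  "bij_betw (\<lambda>q. add_mset (max_part q) q) {q \<in> HH1 (Suc n). max_part q \<in># drop_max q}
    {p \<in> {p \<in> HH1 (Suc (Suc n)). max_part p \<in># drop_max p}. 2 \<le> count (drop_max p) (max_part p)}"
  by (rule bij_betw_dup_max_part)
    (auto simp: HH1_eq add_mset_in_partitions_with_iff repeated_parts_add_mset)

lemma bij_betw_HH1_dup_simple_max:
  "bij_betw (\<lambda>q. add_mset (max_part q) q) (HH (Suc n))
    {p \<in> {p \<in> HH1 (Suc (Suc n)). max_part p \<in># drop_max p}. \<not> 2 \<le> count (drop_max p) (max_part p)}"
  by (rule bij_betw_dup_max_part)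
    (auto simp: HH_eq HH1_eq add_mset_in_partitions_with_iff repeated_parts_add_mset
      simp flip: repeated_parts_empty_iff)

lemma bij_betw_HH1_add_max:
  "bij_betw (\<lambda>q. add_mset (max_part q + 1) q) (HH1 n)
    {p \<in> {p \<in> HH1 (Suc (Suc n)). max_part p \<notin># drop_max p}. max_part p - 1 \<in># p}"
proof (rule bij_betw_add_max_part)
  fix a r assume "\<forall>x\<in>#r. x \<le> a" "\<forall>x\<in>#r. x \<le> a + 1" "add_mset a r \<in> HH1 n"
  moreover from this have "a + 1 \<notin># r" by force
  ultimately show "add_mset (a + 1) (add_mset a r)
      \<in> {p \<in> {p \<in> HH1 (Suc (Suc n)). max_part p \<notin># drop_max p}. max_part p - 1 \<in># p}"
    by (auto simp: HH1_eq add_mset_in_partitions_with_iff repeated_parts_add_mset)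
next
  fix b r assume r: "\<forall>x\<in>#r. x \<le> b"
    and "add_mset b r \<in> {p \<in> {p \<in> HH1 (Suc (Suc n)). max_part p \<notin># drop_max p}. max_part p - 1 \<in># p}"
  then have "0 < b" "b \<notin># r" "b - 1 \<in># r" "\<forall>x\<in>#r. 0 < x" "card (repeated_parts r) = 1"
    "b + size r = Suc (Suc n)"
    by (auto simp: HH1_eq add_mset_in_partitions_with_iff repeated_parts_add_mset)
  moreover from this r have "max_part r = b - 1"
    by (intro max_part_eqI all_le_pred_if_notin)
  ultimately show "r \<in> HH1 n \<and> max_part r + 1 = b"
    by (auto simp: HH1_eq mem_partitions_with_iff)
qed (simp_all add: HH1_eq)

lemma bij_betw_HH1_raise_max:
  "bij_betw (\<lambda>q. add_mset (max_part q + 1) (drop_max q)) {q \<in> HH1 (Suc n). max_part q \<notin># drop_max q}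
    {p \<in> {p \<in> HH1 (Suc (Suc n)). max_part p \<notin># drop_max p}. max_part p - 1 \<notin># p}"
proof (rule bij_betw_raise_max_part)
  fix a r assume "\<forall>x\<in>#r. x \<le> a" "\<forall>x\<in>#r. x \<le> a + 1"
    "add_mset a r \<in> {q \<in> HH1 (Suc n). max_part q \<notin># drop_max q}"
  moreover from this have "a + 1 \<notin># r" by force
  ultimately show "add_mset (a + 1) r
      \<in> {p \<in> {p \<in> HH1 (Suc (Suc n)). max_part p \<notin># drop_max p}. max_part p - 1 \<notin># p}"
    by (auto simp: HH1_eq add_mset_in_partitions_with_iff repeated_parts_add_mset)
next
  fix b r assume r: "\<forall>x\<in>#r. x \<le> b"
    and p: "add_mset b r \<in> {p \<in> {p \<in> HH1 (Suc (Suc n)). max_part p \<notin># drop_max p}. max_part p - 1 \<notin># p}"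
  then have "b \<notin># r" "b - 1 \<notin># r" "\<forall>x\<in>#r. 0 < x" "card (repeated_parts r) = 1"
    "b + size r = Suc (Suc n)"
    by (auto simp: HH1_eq add_mset_in_partitions_with_iff repeated_parts_add_mset)
  moreover have "2 \<le> b"
    using p by (auto simp: HH1_eq intro: two_le_simple_max_part[OF _ r \<open>b \<notin># r\<close>])
  moreover have "\<forall>x\<in>#r. x \<le> b - 1"
    using r \<open>b \<notin># r\<close> by (rule all_le_pred_if_notin)
  ultimately show "1 \<le> b \<and> (\<forall>x\<in>#r. x \<le> b - 1) \<and>
      add_mset (b - 1) r \<in> {q \<in> HH1 (Suc n). max_part q \<notin># drop_max q}"
    by (auto simp: HH1_eq add_mset_in_partitions_with_iff repeated_parts_add_mset)
qed (simp_all add: HH1_eq)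

lemma h1_Suc_Suc: "h1 (Suc (Suc n)) = h1 (Suc n) + h1 n + fib (Suc n)"
proof -
  let ?R = "\<lambda>m. {p \<in> HH1 m. max_part p \<in># drop_max p}"
  let ?S = "\<lambda>m. {p \<in> HH1 m. max_part p \<notin># drop_max p}"
  have "h1 (Suc (Suc n)) = card (?R (Suc (Suc n))) + card (?S (Suc (Suc n)))"
    unfolding h1_def by (rule card_filter_split[OF finite_HH1])
  also have "card (?R (Suc (Suc n))) =
      card {p \<in> ?R (Suc (Suc n)). 2 \<le> count (drop_max p) (max_part p)}
      + card {p \<in> ?R (Suc (Suc n)). \<not> 2 \<le> count (drop_max p) (max_part p)}"
    by (rule card_filter_split) (simp add: finite_HH1)
  also have "\<dots> = card (?R (Suc n)) + fib (Suc n)"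
    using bij_betw_same_card[OF bij_betw_HH1_dup_repeated_max]
      bij_betw_same_card[OF bij_betw_HH1_dup_simple_max]
    by (simp add: card_HH)
  also have "card (?S (Suc (Suc n))) =
      card {p \<in> ?S (Suc (Suc n)). max_part p - 1 \<in># p} + card {p \<in> ?S (Suc (Suc n)). max_part p - 1 \<notin># p}"
    by (rule card_filter_split) (simp add: finite_HH1)
  also have "\<dots> = h1 n + card (?S (Suc n))"
    using bij_betw_same_card[OF bij_betw_HH1_add_max] bij_betw_same_card[OF bij_betw_HH1_raise_max]
    by (simp add: h1_def)
  finally have "h1 (Suc (Suc n)) = card (?R (Suc n)) + fib (Suc n) + (h1 n + card (?S (Suc n)))" .
  moreover have "card (?R (Suc n)) + card (?S (Suc n)) = h1 (Suc n)"
    unfolding h1_def by (rule card_filter_split[OF finite_HH1, symmetric])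
  ultimately show ?thesis by simp
qed

theorem mainTheorem5:
  fixes M :: nat
  assumes "M \<ge> 2"
  shows "g M = g (M - 1) + g (M - 2) + fib (M - 1) \<and>
         h M = h (M - 1) + h (M - 2) + fib (M - 2) \<and>
         g1 M = g1 (M - 1) + g1 (M - 2) + fib (M - 1) \<and>
         h1 M = h1 (M - 1) + h1 (M - 2) + fib (M - 1)"
proof -
  obtain n where "M = Suc (Suc n)"
    using assms by (metis add_2_eq_Suc le_Suc_ex)
  then show ?thesis
    using g_Suc_Suc h_Suc_Suc g1_Suc_Suc h1_Suc_Suc by simp
qed

end
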